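(* Let $0<q<1$, $q^*=2-q$, and let $X_1$ be a real random variable. Define $\theta(a)=\left[\mathbb{E}\exp_{q^*}(aX_1)\right]^{1-q}a$. Then $\theta$ is a strictly increasing function of $a$ on the open interval of values $a$ for which $0<\mathbb{E}\exp_{q^*}(aX_1)<+\infty$.
   Context: For $q\in(0,2)$, $q\ne1$, the $q$-deformed exponential is $\exp_q(u)=[1+(1-q)u]_+^{1/(1-q)}$ for real $u$ (value in $[0,+\infty]$), where $[u]_+=\max(u,0)$. *)

theory Defs
  imports "HOL-Probability.Probability"
begin

definition qexp :: "real \<Rightarrow> real \<Rightarrow> ennreal" where
  "qexp q u = (if 1 + (1 - q) * u > 0
               then ennreal ((1 + (1 - q) * u) powr (1 / (1 - q)))
               else if 1 / (1 - q) > 0 then 0 else \<infinity>)"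

end

theory Submission imports Defs begin

text \<open>Write \<open>p = 1 - q\<close> and \<open>G(a) = E exp_{2-q}(a X)\<close>. Since \<open>exp_{2-q}(u) = (1 - p u) powr (-1/p)\<close>,
  and is infinite once \<open>1 - p u \<le> 0\<close>, finiteness of \<open>G(a)\<close> forces \<open>1 - p a X > 0\<close> almost
  surely, and then \<open>h(a) = |a| powr (1/p) * G(a) = E ((1 - p a X)/|a|) powr (-1/p)\<close>. The base
  \<open>(1 - p a X)/|a| = 1/|a| - p sgn(a) X\<close> decreases in \<open>a > 0\<close> and increases in \<open>a < 0\<close>, so \<open>h\<close> is
  strictly increasing on the positive and strictly decreasing on the negative part of the domain.
  Since \<open>\<theta>(a) = G(a) powr p * a = sgn(a) * h(a) powr p\<close>, \<open>\<theta>\<close> is strictly increasing.\<close>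

lemma qexp_measurable [measurable]:
  assumes [measurable]: "f \<in> borel_measurable M"
  shows "(\<lambda>x. qexp r (f x)) \<in> borel_measurable M"
  unfolding qexp_def by measurable

lemma qexp_conj_eq_top_iff:
  assumes "q < 1"
  shows "qexp (2 - q) u = \<infinity> \<longleftrightarrow> 1 - (1 - q) * u \<le> 0"
  using assms unfolding qexp_def by (auto simp: algebra_simps divide_simps)

lemma ennreal_powr_mult_qexp_conj:
  assumes "q < 1" and "0 < s" and "0 < 1 - (1 - q) * u"
  shows "ennreal (s powr (1 / (1 - q))) * qexp (2 - q) u
           = ennreal (((1 - (1 - q) * u) / s) powr (- 1 / (1 - q)))"
proof -
  have "qexp (2 - q) u = ennreal ((1 - (1 - q) * u) powr (- 1 / (1 - q)))"
  proof -
    have "1 + (1 - (2 - q)) * u = 1 - (1 - q) * u" "1 / (1 - (2 - q)) = - 1 / (1 - q)"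
      using assms(1) by (simp_all add: field_simps)
    then show ?thesis
      using assms by (simp add: qexp_def)
  qed
  moreover have "s powr (1 / (1 - q)) * (1 - (1 - q) * u) powr (- 1 / (1 - q))
                   = ((1 - (1 - q) * u) / s) powr (- 1 / (1 - q))"
    using assms by (simp add: powr_divide powr_minus divide_simps)
  ultimately show ?thesis
    by (simp add: ennreal_mult'[symmetric])
qed

lemma (in prob_space) nn_integral_strict_mono_AE:
  assumes [measurable]: "f \<in> borel_measurable M" "g \<in> borel_measurable M"
    and "(\<integral>\<^sup>+ x. f x \<partial>M) \<noteq> \<infinity>" and "AE x in M. f x < g x"
  shows "(\<integral>\<^sup>+ x. f x \<partial>M) < (\<integral>\<^sup>+ x. g x \<partial>M)"
proof (rule nn_integral_less)
  show "AE x in M. f x \<le> g x"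
    using assms(4) by eventually_elim simp
  show "\<not> (AE x in M. g x \<le> f x)"
  proof
    assume "AE x in M. g x \<le> f x"
    with assms(4) have "AE x in M. False"
      by eventually_elim auto
    then show False
      by simp
  qed
qed (use assms in auto)

lemma (in prob_space) scaled_qexp_conj_integral_less:
  assumes [measurable]: "X \<in> borel_measurable M"
    and "q < 1" and "0 < s" and "0 < t"
    and fin_a: "(\<integral>\<^sup>+ x. qexp (2 - q) (a * X x) \<partial>M) < \<infinity>"
    and fin_b: "(\<integral>\<^sup>+ x. qexp (2 - q) (b * X x) \<partial>M) < \<infinity>"
    and base_less: "\<And>x. (1 - (1 - q) * (b * X x)) / t < (1 - (1 - q) * (a * X x)) / s"
  shows "s powr (1 / (1 - q)) * enn2real (\<integral>\<^sup>+ x. qexp (2 - q) (a * X x) \<partial>M)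
           < t powr (1 / (1 - q)) * enn2real (\<integral>\<^sup>+ x. qexp (2 - q) (b * X x) \<partial>M)"
proof -
  let ?G = "\<lambda>c x. qexp (2 - q) (c * X x)"
  have "AE x in M. ?G a x \<noteq> \<infinity>"
    by (rule nn_integral_PInf_AE) (use fin_a in auto)
  moreover have "AE x in M. ?G b x \<noteq> \<infinity>"
    by (rule nn_integral_PInf_AE) (use fin_b in auto)
  ultimately have "AE x in M. ennreal (s powr (1 / (1 - q))) * ?G a x
                          < ennreal (t powr (1 / (1 - q))) * ?G b x"
  proof eventually_elim
    case (elim x)
    then have pos: "0 < 1 - (1 - q) * (a * X x)" "0 < 1 - (1 - q) * (b * X x)"
      using qexp_conj_eq_top_iff[OF \<open>q < 1\<close>] by (auto simp: not_le)
    have "((1 - (1 - q) * (a * X x)) / s) powr (- 1 / (1 - q))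
            < ((1 - (1 - q) * (b * X x)) / t) powr (- 1 / (1 - q))"
      using assms pos base_less by (intro powr_less_mono2_neg) auto
    then show ?case
      using assms pos by (simp add: ennreal_powr_mult_qexp_conj ennreal_less_iff)
  qed
  then have "(\<integral>\<^sup>+ x. ennreal (s powr (1 / (1 - q))) * ?G a x \<partial>M)
               < (\<integral>\<^sup>+ x. ennreal (t powr (1 / (1 - q))) * ?G b x \<partial>M)"
    using fin_a by (intro nn_integral_strict_mono_AE) (auto simp: nn_integral_cmult ennreal_mult_eq_top_iff)
  then have "ennreal (s powr (1 / (1 - q)) * enn2real (\<integral>\<^sup>+ x. ?G a x \<partial>M))
               < ennreal (t powr (1 / (1 - q)) * enn2real (\<integral>\<^sup>+ x. ?G b x \<partial>M))"
    using fin_a fin_b by (simp add: nn_integral_cmult ennreal_mult less_top[symmetric])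
  then show ?thesis
    by (simp add: ennreal_less_iff)
qed

lemma powr_mult_eq_sgn_mult_powr:
  fixes g p a :: real
  assumes "0 < g" and "0 < p"
  shows "g powr p * a = sgn a * (\<bar>a\<bar> powr (1 / p) * g) powr p"
  using assms by (cases a "0 :: real" rule: linorder_cases)
    (auto simp: powr_mult powr_powr)

lemma strict_mono_on_sgn_mult_powr:
  fixes h :: "real \<Rightarrow> real" and p :: real
  assumes "0 < p"
    and pos: "\<And>c. c \<in> S \<Longrightarrow> c \<noteq> 0 \<Longrightarrow> 0 < h c"
    and incr: "\<And>a b. a \<in> S \<Longrightarrow> b \<in> S \<Longrightarrow> 0 < a \<Longrightarrow> a < b \<Longrightarrow> h a < h b"
    and decr: "\<And>a b. a \<in> S \<Longrightarrow> b \<in> S \<Longrightarrow> a < b \<Longrightarrow> b < 0 \<Longrightarrow> h b < h a"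
  shows "strict_mono_on S (\<lambda>c. sgn c * h c powr p)"
proof (rule strict_mono_onI)
  fix a b assume ab: "a \<in> S" "b \<in> S" "a < b"
  consider "0 < a" | "b < 0" | "a \<le> 0" "0 \<le> b"
    by linarith
  then show "sgn a * h a powr p < sgn b * h b powr p"
  proof cases
    case 1
    then show ?thesis
      using ab pos[of a] incr[of a b] \<open>0 < p\<close> by (auto intro: powr_less_mono2)
  next
    case 2
    then show ?thesis
      using ab pos[of b] decr[of a b] \<open>0 < p\<close> by (auto intro: powr_less_mono2)
  next
    case 3
    have "sgn a * h a powr p \<le> 0" "0 \<le> sgn b * h b powr p"
      using 3 by (simp_all add: sgn_if)
    moreover have "sgn a * h a powr p < 0 \<or> 0 < sgn b * h b powr p"
      using 3 ab pos[of a] pos[of b] by (auto simp: sgn_if)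
    ultimately show ?thesis
      by linarith
  qed
qed

theorem lemma1:
  fixes M :: "'a measure" and X :: "'a \<Rightarrow> real" and q :: real
  assumes "prob_space M"
    and "X \<in> borel_measurable M"
    and "0 < q" and "q < 1"
  shows "strict_mono_on
           {a. 0 < (\<integral>\<^sup>+ x. qexp (2 - q) (a * X x) \<partial>M) \<and> (\<integral>\<^sup>+ x. qexp (2 - q) (a * X x) \<partial>M) < \<infinity>}
           (\<lambda>a. enn2real (\<integral>\<^sup>+ x. qexp (2 - q) (a * X x) \<partial>M) powr (1 - q) * a)"
    (is "strict_mono_on ?S (\<lambda>a. ?F a powr (1 - q) * a)")
proof -
  interpret prob_space M by fact
  define h where "h c = \<bar>c\<bar> powr (1 / (1 - q)) * ?F c" for c
  have F_pos: "0 < ?F c" if "c \<in> ?S" for c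
    using that by (auto simp: enn2real_positive_iff)
  have "strict_mono_on ?S (\<lambda>c. sgn c * h c powr (1 - q))"
  proof (rule strict_mono_on_sgn_mult_powr)
    show "0 < h c" if "c \<in> ?S" "c \<noteq> 0" for c
      using that F_pos[OF that(1)] by (simp add: h_def)
    show "h a < h b" if "a \<in> ?S" "b \<in> ?S" "0 < a" "a < b" for a b
      using that assms(2,4) unfolding h_def
      by (intro scaled_qexp_conj_integral_less) (auto simp: field_simps)
    show "h b < h a" if "a \<in> ?S" "b \<in> ?S" "a < b" "b < 0" for a b
      using that assms(2,4) unfolding h_def
      by (intro scaled_qexp_conj_integral_less) (auto simp: field_simps)
  qed (use assms in simp)
  moreover have "?F c powr (1 - q) * c = sgn c * h c powr (1 - q)" if "c \<in> ?S" for c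
    using F_pos[OF that] assms unfolding h_def by (intro powr_mult_eq_sgn_mult_powr) auto
  ultimately show ?thesis
    by (auto simp: strict_mono_on_def)
qed

end
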